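(* Let $\alpha\le\omega$ and let $\mathcal A=((A_i,<_{A_i})\mid i<\alpha)$ and $\mathcal B=((B_i,<_{B_i})\mid i<\alpha)$ be sequences of countable linear orders shuffled by families $\mathcal S_A=(S^A_{i,j}\mid i<j<\alpha)$ and $\mathcal S_B=(S^B_{i,j}\mid i<j<\alpha)$ respectively. The following are equivalent: (1) the limit structures $(\bigsqcup_{\mathcal S_A}\mathcal A,\subset,\pi^A_i(A_i))_{i<\alpha}$ and $(\bigsqcup_{\mathcal S_B}\mathcal B,\subset,\pi^B_i(B_i))_{i<\alpha}$ are isomorphic; (2) there are order isomorphisms $f_i:A_i\to B_i$ ($i<\alpha$) such that for all $i<j<\alpha$, $x\in A_i$, $y\in A_j$: $(x,y)\in S^A_{i,j}$ iff $(f_i(x),f_j(y))\in S^B_{i,j}$; (3) $(A_i,<_{A_i})\cong(B_i,<_{B_i})$ for all $i<\alpha$.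
   Context: For a relation $S\subseteq X\times Y$, $S(X,y)=\{x:(x,y)\in S\}$ and $S(x,Y)=\{y:(x,y)\in S\}$. A shuffling relation between linear orders $(X,<_X),(Y,<_Y)$ is a non-empty $S\subseteq X\times Y$ such that (1) $(S(X,y)\mid y\in Y)$ is a strictly increasing sequence of initial segments of $X$, none of which has a supremum in $X$, and (2) $(S(x,Y)\mid x\in X)$ is a strictly decreasing sequence of final segments of $Y$. A family $(S_{i,j}\subseteq A_i\times A_j\mid i<j<\alpha)$ shuffles $((A_i,<_i)\mid i<\alpha)$ if each $S_{i,j}$ is a shuffling relation between $A_i$ and $A_j$ and $S_{j,k}\circ S_{i,j}=S_{i,k}$ for all $i<j<k<\alpha$ (composition: $(a,c)\in S_{j,k}\circ S_{i,j}$ iff there is $b$ with $(a,b)\in S_{i,j}$, $(b,c)\in S_{j,k}$). For a dense linear order $A_0$, $\mathfrak D(A_0)$ is the set of all topologically open initial segments of $A_0$ (including $\emptyset$, excluding $A_0$ if it has a maximum), ordered by $\subset$. The canonical maps are $\pi_0(x)=\{y\in A_0:y<x\}$ and $\pi_i(x)=S_{0,i}(A_0,x)$ for $i>0$; the limit structure is $\bigsqcup_{\mathcal S}\mathcal A=\bigcup_{i<\alpha}\pi_i(A_i)\subseteq\mathfrak D(A_0)$, ordered by $\subset$ and with a unary predicate for each $\pi_i(A_i)$. *)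

theory Defs
  imports Main "HOL-Library.Countable_Set" "HOL-Library.Extended_Nat"
begin

definition lin_ord :: "'a set \<Rightarrow> ('a \<times> 'a) set \<Rightarrow> bool" where
  "lin_ord X r \<longleftrightarrow> r \<subseteq> X \<times> X \<and> irrefl r \<and> trans r \<and> total_on X r"

definition order_iso :: "'a set \<Rightarrow> ('a \<times> 'a) set \<Rightarrow> 'b set \<Rightarrow> ('b \<times> 'b) set \<Rightarrow> ('a \<Rightarrow> 'b) \<Rightarrow> bool" where
  "order_iso X r Y s f \<longleftrightarrow> bij_betw f X Y \<and> (\<forall>x\<in>X. \<forall>y\<in>X. (x, y) \<in> r \<longleftrightarrow> (f x, f y) \<in> s)"

definition initial_seg :: "'a set \<Rightarrow> ('a \<times> 'a) set \<Rightarrow> 'a set \<Rightarrow> bool" where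
  "initial_seg X r U \<longleftrightarrow> U \<subseteq> X \<and> (\<forall>u\<in>U. \<forall>x\<in>X. (x, u) \<in> r \<longrightarrow> x \<in> U)"

definition final_seg :: "'a set \<Rightarrow> ('a \<times> 'a) set \<Rightarrow> 'a set \<Rightarrow> bool" where
  "final_seg X r U \<longleftrightarrow> U \<subseteq> X \<and> (\<forall>u\<in>U. \<forall>x\<in>X. (u, x) \<in> r \<longrightarrow> x \<in> U)"

definition is_sup_in :: "'a set \<Rightarrow> ('a \<times> 'a) set \<Rightarrow> 'a set \<Rightarrow> 'a \<Rightarrow> bool" where
  "is_sup_in X r U s \<longleftrightarrow> s \<in> X \<and> (\<forall>u\<in>U. u = s \<or> (u, s) \<in> r) \<and>
     (\<forall>t\<in>X. (\<forall>u\<in>U. u = t \<or> (u, t) \<in> r) \<longrightarrow> s = t \<or> (s, t) \<in> r)"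

definition sec_left :: "('a \<times> 'b) set \<Rightarrow> 'b \<Rightarrow> 'a set" where
  "sec_left S y = {x. (x, y) \<in> S}"

definition sec_right :: "('a \<times> 'b) set \<Rightarrow> 'a \<Rightarrow> 'b set" where
  "sec_right S x = {y. (x, y) \<in> S}"

definition shuffling :: "'a set \<Rightarrow> ('a \<times> 'a) set \<Rightarrow> 'b set \<Rightarrow> ('b \<times> 'b) set \<Rightarrow> ('a \<times> 'b) set \<Rightarrow> bool" where
  "shuffling X r Y s S \<longleftrightarrow> S \<noteq> {} \<and> S \<subseteq> X \<times> Y \<and>
     (\<forall>y\<in>Y. initial_seg X r (sec_left S y) \<and> \<not> (\<exists>z. is_sup_in X r (sec_left S y) z)) \<and>
     (\<forall>y\<in>Y. \<forall>y'\<in>Y. (y, y') \<in> s \<longrightarrow> sec_left S y \<subset> sec_left S y') \<and>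
     (\<forall>x\<in>X. final_seg Y s (sec_right S x)) \<and>
     (\<forall>x\<in>X. \<forall>x'\<in>X. (x, x') \<in> r \<longrightarrow> sec_right S x' \<subset> sec_right S x)"

text \<open>Families indexed by i < \<alpha>, with \<alpha> \<le> \<omega> represented as an extended natural.\<close>
definition shuffles :: "enat \<Rightarrow> (nat \<Rightarrow> 'a set) \<Rightarrow> (nat \<Rightarrow> ('a \<times> 'a) set) \<Rightarrow> (nat \<Rightarrow> nat \<Rightarrow> ('a \<times> 'a) set) \<Rightarrow> bool" where
  "shuffles \<alpha> A L S \<longleftrightarrow>
     (\<forall>i j. i < j \<and> enat j < \<alpha> \<longrightarrow> shuffling (A i) (L i) (A j) (L j) (S i j)) \<and>
     (\<forall>i j k. i < j \<and> j < k \<and> enat k < \<alpha> \<longrightarrow> S i j O S j k = S i k)"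

definition canon_map :: "(nat \<Rightarrow> ('a \<times> 'a) set) \<Rightarrow> (nat \<Rightarrow> nat \<Rightarrow> ('a \<times> 'a) set) \<Rightarrow> (nat \<Rightarrow> 'a set) \<Rightarrow> nat \<Rightarrow> 'a \<Rightarrow> 'a set" where
  "canon_map L S A i x = (if i = 0 then {y \<in> A 0. (y, x) \<in> L 0} else {a \<in> A 0. (a, x) \<in> S 0 i})"

definition pred_part :: "(nat \<Rightarrow> 'a set) \<Rightarrow> (nat \<Rightarrow> ('a \<times> 'a) set) \<Rightarrow> (nat \<Rightarrow> nat \<Rightarrow> ('a \<times> 'a) set) \<Rightarrow> nat \<Rightarrow> 'a set set" where
  "pred_part A L S i = canon_map L S A i ` A i"

definition limit_str :: "enat \<Rightarrow> (nat \<Rightarrow> 'a set) \<Rightarrow> (nat \<Rightarrow> ('a \<times> 'a) set) \<Rightarrow> (nat \<Rightarrow> nat \<Rightarrow> ('a \<times> 'a) set) \<Rightarrow> 'a set set" where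
  "limit_str \<alpha> A L S = (\<Union>i\<in>{i. enat i < \<alpha>}. pred_part A L S i)"

definition limit_iso :: "enat \<Rightarrow> (nat \<Rightarrow> 'a set) \<Rightarrow> (nat \<Rightarrow> ('a \<times> 'a) set) \<Rightarrow> (nat \<Rightarrow> nat \<Rightarrow> ('a \<times> 'a) set)
    \<Rightarrow> (nat \<Rightarrow> 'b set) \<Rightarrow> (nat \<Rightarrow> ('b \<times> 'b) set) \<Rightarrow> (nat \<Rightarrow> nat \<Rightarrow> ('b \<times> 'b) set) \<Rightarrow> ('a set \<Rightarrow> 'b set) \<Rightarrow> bool" where
  "limit_iso \<alpha> A LA SA B LB SB h \<longleftrightarrow>
     bij_betw h (limit_str \<alpha> A LA SA) (limit_str \<alpha> B LB SB) \<and>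
     (\<forall>U\<in>limit_str \<alpha> A LA SA. \<forall>V\<in>limit_str \<alpha> A LA SA. U \<subset> V \<longleftrightarrow> h U \<subset> h V) \<and>
     (\<forall>i. enat i < \<alpha> \<longrightarrow> (\<forall>U\<in>limit_str \<alpha> A LA SA. U \<in> pred_part A LA SA i \<longleftrightarrow> h U \<in> pred_part B LB SB i))"

end

theory Submission
  imports Defs
begin

text \<open>
  Identifying \<open>x \<in> A i\<close> with \<open>\<pi> i x\<close>, the limit structure is a copy of the disjoint union of the
  \<open>A i\<close> under the order read off from the shuffling relations, coloured by the level; so
  isomorphisms of limit structures correspond exactly to level-wise isomorphisms respecting the
  shuffling relations, which gives (1) \<open>\<longleftrightarrow>\<close> (2).
  For (3) \<open>\<Longrightarrow>\<close> (1) with at least two levels, the limit structure is a countable chain of initial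
  segments of \<open>A 0\<close> in which every colour is dense, and whose least (greatest) element exists and has
  colour \<open>k\<close> exactly when \<open>A k\<close> has a least (greatest) element. Cantor's back-and-forth argument then
  yields a colour-preserving isomorphism. With at most one level there are no shuffling relations.
\<close>

lemma lin_ord_cases: "lin_ord X r \<Longrightarrow> x \<in> X \<Longrightarrow> y \<in> X \<Longrightarrow> x = y \<or> (x, y) \<in> r \<or> (y, x) \<in> r"
  unfolding lin_ord_def total_on_def by blast

lemma lin_ord_irrefl: "lin_ord X r \<Longrightarrow> (x, x) \<notin> r"
  unfolding lin_ord_def irrefl_def by blast

lemma lin_ord_trans: "lin_ord X r \<Longrightarrow> (x, y) \<in> r \<Longrightarrow> (y, z) \<in> r \<Longrightarrow> (x, z) \<in> r"
  unfolding lin_ord_def trans_def by blast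

lemma lin_ord_asym: "lin_ord X r \<Longrightarrow> (x, y) \<in> r \<Longrightarrow> (y, x) \<notin> r"
  using lin_ord_trans[of X r x y x] lin_ord_irrefl[of X r x] by blast

lemma lin_ord_field: "lin_ord X r \<Longrightarrow> (x, y) \<in> r \<Longrightarrow> x \<in> X \<and> y \<in> X"
  unfolding lin_ord_def by blast

lemma initial_seg_subset: "initial_seg X r C \<Longrightarrow> C \<subseteq> X"
  unfolding initial_seg_def by blast

lemma initial_segD: "initial_seg X r C \<Longrightarrow> c \<in> C \<Longrightarrow> x \<in> X \<Longrightarrow> (x, c) \<in> r \<Longrightarrow> x \<in> C"
  unfolding initial_seg_def by blast

lemma initial_seg_below:
  assumes lo: "lin_ord X r" and C: "initial_seg X r C" and c: "c \<in> C" and x: "x \<in> X - C"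
  shows "(c, x) \<in> r"
proof -
  have "c \<in> X" using c initial_seg_subset[OF C] by blast
  then have "c = x \<or> (c, x) \<in> r \<or> (x, c) \<in> r" using lin_ord_cases[OF lo] x by blast
  then show ?thesis using initial_segD[OF C c] c x by blast
qed

lemma initial_seg_no_sup_no_greatest:
  assumes lo: "lin_ord X r" and C: "initial_seg X r C" and no_sup: "\<nexists>z. is_sup_in X r C z"
    and a: "a \<in> C"
  shows "\<exists>a'\<in>C. (a, a') \<in> r"
proof (rule ccontr)
  assume no_greater: "\<not> (\<exists>a'\<in>C. (a, a') \<in> r)"
  have "is_sup_in X r C a"
    unfolding is_sup_in_def
  proof (intro conjI ballI impI)
    show aX: "a \<in> X" using a initial_seg_subset[OF C] by blast
    fix u assume "u \<in> C"
    then show "u = a \<or> (u, a) \<in> r"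
      using lin_ord_cases[OF lo aX, of u] initial_seg_subset[OF C] no_greater by blast
  next
    fix t assume "\<forall>u\<in>C. u = t \<or> (u, t) \<in> r"
    then show "a = t \<or> (a, t) \<in> r" using a by blast
  qed
  then show False using no_sup by blast
qed

lemma initial_seg_chain:
  assumes "lin_ord X r" "initial_seg X r C" "initial_seg X r D"
  shows "C \<subseteq> D \<or> D \<subseteq> C"
proof (rule ccontr)
  assume "\<not> (C \<subseteq> D \<or> D \<subseteq> C)"
  then obtain c d where c: "c \<in> C - D" and d: "d \<in> D - C" by blast
  have "(c, d) \<in> r" using initial_seg_below[OF assms(1,2)] c d initial_seg_subset[OF assms(3)] by blast
  moreover have "(d, c) \<in> r"
    using initial_seg_below[OF assms(1,3)] c d initial_seg_subset[OF assms(2)] by blast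
  ultimately show False using lin_ord_asym[OF assms(1)] by blast
qed

lemma initial_seg_between:
  assumes lo: "lin_ord X r" and C: "initial_seg X r C" and D: "initial_seg X r D" and Z: "initial_seg X r Z"
    and a: "a \<in> D - C" "a \<in> Z" and b: "b \<in> D - Z" "(a, b) \<in> r"
  shows "C \<subset> Z \<and> Z \<subset> D"
proof -
  have aX: "a \<in> X" and bX: "b \<in> X" using lin_ord_field[OF lo b(2)] by auto
  have "C \<subseteq> Z"
  proof
    fix t assume t: "t \<in> C"
    then have "(t, a) \<in> r" using initial_seg_below[OF lo C t] aX a(1) by blast
    then show "t \<in> Z" using initial_segD[OF Z a(2)] initial_seg_subset[OF C] t by blast
  qed
  moreover have "Z \<subseteq> D"
  proof
    fix t assume t: "t \<in> Z"
    then have "(t, b) \<in> r" using initial_seg_below[OF lo Z t] bX b(1) by blast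
    then show "t \<in> D" using initial_segD[OF D] initial_seg_subset[OF Z] t b(1) by blast
  qed
  ultimately show ?thesis using a b by blast
qed

definition has_least :: "'a set \<Rightarrow> ('a \<times> 'a) set \<Rightarrow> bool" where
  "has_least X r \<longleftrightarrow> (\<exists>a\<in>X. \<forall>x\<in>X. x = a \<or> (a, x) \<in> r)"

abbreviation has_greatest :: "'a set \<Rightarrow> ('a \<times> 'a) set \<Rightarrow> bool" where
  "has_greatest X r \<equiv> has_least X (r\<inverse>)"

lemma order_iso_converse: "order_iso X r Y s g \<Longrightarrow> order_iso X (r\<inverse>) Y (s\<inverse>) g"
  unfolding order_iso_def by simp

lemma order_iso_has_least:
  assumes g: "order_iso X r Y s g"
  shows "has_least X r \<longleftrightarrow> has_least Y s"
proof -
  have bij: "bij_betw g X Y" and ord: "\<And>x y. x \<in> X \<Longrightarrow> y \<in> X \<Longrightarrow> (x, y) \<in> r \<longleftrightarrow> (g x, g y) \<in> s"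
    using g unfolding order_iso_def by blast+
  have "(\<forall>x\<in>X. x = a \<or> (a, x) \<in> r) \<longleftrightarrow> (\<forall>y\<in>Y. y = g a \<or> (g a, y) \<in> s)" if a: "a \<in> X" for a
  proof -
    have "(\<forall>x\<in>X. x = a \<or> (a, x) \<in> r) \<longleftrightarrow> (\<forall>x\<in>X. g x = g a \<or> (g a, g x) \<in> s)"
      using ord[OF a] bij_betw_imp_inj_on[OF bij] a unfolding inj_on_def by auto
    also have "\<dots> \<longleftrightarrow> (\<forall>y\<in>Y. y = g a \<or> (g a, y) \<in> s)"
      using bij_betw_imp_surj_on[OF bij] by blast
    finally show ?thesis .
  qed
  then show ?thesis
    unfolding has_least_def using bij_betw_imp_surj_on[OF bij] by blast
qed

lemma image_cut_psubset_Union: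
  assumes lo: "lin_ord X r" and mono: "\<And>x x'. x \<in> X \<Longrightarrow> x' \<in> X \<Longrightarrow> (x, x') \<in> r \<Longrightarrow> f x \<subset> f x'"
    and C: "initial_seg X r C" and no_sup: "\<nexists>z. is_sup_in X r C z" and x: "x \<in> C"
  shows "f x \<subset> \<Union>(f ` C)"
proof -
  obtain x' where "x' \<in> C" "(x, x') \<in> r"
    using initial_seg_no_sup_no_greatest[OF lo C no_sup x] by blast
  then show ?thesis using mono[of x x'] initial_seg_subset[OF C] x by blast
qed

text \<open>If the union were \<open>f x\<close> itself, then \<open>x\<close> would be the supremum of the cut \<open>C\<close>.\<close>

lemma Union_cut_psubset_image:
  assumes lo: "lin_ord X r" and mono: "\<And>x x'. x \<in> X \<Longrightarrow> x' \<in> X \<Longrightarrow> (x, x') \<in> r \<Longrightarrow> f x \<subset> f x'"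
    and C: "initial_seg X r C" and no_sup: "\<nexists>z. is_sup_in X r C z" and x: "x \<in> X - C"
  shows "\<Union>(f ` C) \<subset> f x"
proof -
  have CX: "C \<subseteq> X" using initial_seg_subset[OF C] .
  have below: "(c, x) \<in> r" if "c \<in> C" for c using initial_seg_below[OF lo C that x] .
  have sub: "\<Union>(f ` C) \<subseteq> f x" using mono below CX x by blast
  have "is_sup_in X r C x" if eq: "\<Union>(f ` C) = f x"
    unfolding is_sup_in_def
  proof (intro conjI ballI impI)
    fix t assume t: "t \<in> X" and ub: "\<forall>c\<in>C. c = t \<or> (c, t) \<in> r"
    show "x = t \<or> (x, t) \<in> r"
    proof (rule ccontr)
      assume "\<not> (x = t \<or> (x, t) \<in> r)"
      then have "(t, x) \<in> r" using lin_ord_cases[OF lo t] x by blast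
      then obtain e where "e \<in> \<Union>(f ` C)" "e \<notin> f t" using mono[of t x] t x eq by blast
      moreover have "f c \<subseteq> f t" if c: "c \<in> C" for c
        using ub c mono[of c t] CX t by (cases "c = t") auto
      ultimately show False by blast
    qed
  qed (use x below in auto)
  then show ?thesis using sub no_sup by blast
qed

section \<open>The back-and-forth method\<close>

lemma countable_back_and_forth:
  fixes X :: "'a set" and Y :: "'b set" and Q :: "('a \<times> 'b) set \<Rightarrow> bool"
  assumes X: "countable X" and Y: "countable Y"
    and forward: "\<And>p x. Q p \<Longrightarrow> x \<in> X \<Longrightarrow> \<exists>y. Q (insert (x, y) p)"
    and backward: "\<And>p y. Q p \<Longrightarrow> y \<in> Y \<Longrightarrow> \<exists>x. Q (insert (x, y) p)"
    and empty: "Q {}"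
  shows "\<exists>R. (\<forall>x\<in>X. x \<in> Domain R) \<and> (\<forall>y\<in>Y. y \<in> Range R) \<and> (\<forall>a\<in>R. \<forall>b\<in>R. \<exists>p. Q p \<and> a \<in> p \<and> b \<in> p)"
proof -
  \<comment> \<open>stage \<open>n\<close> adds the \<open>n\<close>-th elements of \<open>X\<close> and \<open>Y\<close> in fixed enumerations\<close>
  have "\<exists>p'. Q p' \<and> p \<subseteq> p' \<and> (X \<noteq> {} \<longrightarrow> from_nat_into X n \<in> Domain p')
      \<and> (Y \<noteq> {} \<longrightarrow> from_nat_into Y n \<in> Range p')" if Qp: "Q p" for p n
  proof -
    obtain p1 where p1: "Q p1" "p \<subseteq> p1" "X \<noteq> {} \<longrightarrow> from_nat_into X n \<in> Domain p1"
      using Qp forward[of p "from_nat_into X n"] from_nat_into[of X n] by (cases "X = {}") blast+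
    then obtain p2 where "Q p2" "p1 \<subseteq> p2" "Y \<noteq> {} \<longrightarrow> from_nat_into Y n \<in> Range p2"
      using backward[of p1 "from_nat_into Y n"] from_nat_into[of Y n] by (cases "Y = {}") blast+
    then show "\<exists>p'. Q p' \<and> p \<subseteq> p' \<and> (X \<noteq> {} \<longrightarrow> from_nat_into X n \<in> Domain p')
      \<and> (Y \<noteq> {} \<longrightarrow> from_nat_into Y n \<in> Range p')" using p1 by blast
  qed
  then obtain ext where ext: "\<And>p n. Q p \<Longrightarrow> Q (ext p n) \<and> p \<subseteq> ext p n
      \<and> (X \<noteq> {} \<longrightarrow> from_nat_into X n \<in> Domain (ext p n)) \<and> (Y \<noteq> {} \<longrightarrow> from_nat_into Y n \<in> Range (ext p n))"
    by metis
  define q where "q = rec_nat {} (\<lambda>n p. ext p n)"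
  have q_Suc: "q (Suc n) = ext (q n) n" for n unfolding q_def by simp
  have Q_q: "Q (q n)" for n
    by (induction n) (simp_all add: q_def empty ext)
  have q_mono: "m \<le> n \<Longrightarrow> q m \<subseteq> q n" for m n
    using lift_Suc_mono_le[of q] ext[OF Q_q] q_Suc by simp
  show ?thesis
  proof (rule exI[of _ "\<Union>n. q n"], intro conjI ballI)
    fix x assume x: "x \<in> X"
    then have "x \<in> Domain (q (Suc (to_nat_on X x)))"
      using ext[OF Q_q] q_Suc from_nat_into_to_nat_on[OF X x] by fastforce
    then show "x \<in> Domain (\<Union>n. q n)" by blast
  next
    fix y assume y: "y \<in> Y"
    then have "y \<in> Range (q (Suc (to_nat_on Y y)))"
      using ext[OF Q_q] q_Suc from_nat_into_to_nat_on[OF Y y] by fastforce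
    then show "y \<in> Range (\<Union>n. q n)" by blast
  next
    fix a b assume "a \<in> (\<Union>n. q n)" "b \<in> (\<Union>n. q n)"
    then obtain m n where "a \<in> q m" "b \<in> q n" by blast
    then show "\<exists>p. Q p \<and> a \<in> p \<and> b \<in> p"
      using q_mono[of m "max m n"] q_mono[of n "max m n"] Q_q by auto
  qed
qed

lemma bij_betw_choice_one_to_one:
  assumes dom: "\<forall>x\<in>X. x \<in> Domain R" and ran: "\<forall>y\<in>Y. y \<in> Range R" and sub: "R \<subseteq> X \<times> Y"
    and one_to_one: "\<And>x y x' y'. (x, y) \<in> R \<Longrightarrow> (x', y') \<in> R \<Longrightarrow> x = x' \<longleftrightarrow> y = y'"
  shows "bij_betw (\<lambda>x. SOME y. (x, y) \<in> R) X Y \<and> (\<forall>x\<in>X. (x, SOME y. (x, y) \<in> R) \<in> R)"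
proof -
  have R: "(x, SOME y. (x, y) \<in> R) \<in> R" if "x \<in> X" for x
    using dom that by (metis DomainE someI)
  have "inj_on (\<lambda>x. SOME y. (x, y) \<in> R) X" using one_to_one[OF R R] by (simp add: inj_on_def)
  moreover have "(\<lambda>x. SOME y. (x, y) \<in> R) ` X = Y"
  proof
    show "(\<lambda>x. SOME y. (x, y) \<in> R) ` X \<subseteq> Y" using R sub by blast
    show "Y \<subseteq> (\<lambda>x. SOME y. (x, y) \<in> R) ` X"
    proof
      fix y assume "y \<in> Y"
      then obtain x where xy: "(x, y) \<in> R" using ran by blast
      then have "x \<in> X" using sub by blast
      then show "y \<in> (\<lambda>x. SOME y. (x, y) \<in> R) ` X" using one_to_one[OF xy R] by blast
    qed
  qed
  ultimately show ?thesis using R unfolding bij_betw_def by blast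
qed

section \<open>Countable dense coloured chains\<close>

definition is_least_in :: "'a set set \<Rightarrow> 'a set \<Rightarrow> bool" where
  "is_least_in U m \<longleftrightarrow> m \<in> U \<and> (\<forall>w\<in>U. m \<subseteq> w)"

definition is_greatest_in :: "'a set set \<Rightarrow> 'a set \<Rightarrow> bool" where
  "is_greatest_in U m \<longleftrightarrow> m \<in> U \<and> (\<forall>w\<in>U. w \<subseteq> m)"

lemma has_least_psubset_iff: "has_least U {(v, w). v \<subset> w} \<longleftrightarrow> (\<exists>m. is_least_in U m)"
  unfolding has_least_def is_least_in_def by auto

lemma has_greatest_psubset_iff: "has_greatest U {(v, w). v \<subset> w} \<longleftrightarrow> (\<exists>m. is_greatest_in U m)"
  unfolding has_least_def is_greatest_in_def by auto

lemma finite_chain_has_greatest: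
  assumes "finite F" "F \<noteq> {}" and chain: "\<And>v w. v \<in> F \<Longrightarrow> w \<in> F \<Longrightarrow> v \<subseteq> w \<or> w \<subseteq> v"
  shows "\<exists>m\<in>F. \<forall>w\<in>F. w \<subseteq> m"
proof -
  obtain m where m: "m \<in> F" "\<forall>w\<in>F. m \<subseteq> w \<longrightarrow> m = w" using finite_has_maximal[OF assms(1,2)] by blast
  have "w \<subseteq> m" if "w \<in> F" for w using chain[OF m(1) that] m(2) that by auto
  then show ?thesis using m(1) by blast
qed

lemma finite_chain_has_least:
  assumes "finite F" "F \<noteq> {}" and chain: "\<And>v w. v \<in> F \<Longrightarrow> w \<in> F \<Longrightarrow> v \<subseteq> w \<or> w \<subseteq> v"
  shows "\<exists>m\<in>F. \<forall>w\<in>F. m \<subseteq> w"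
proof -
  obtain m where m: "m \<in> F" "\<forall>w\<in>F. w \<subseteq> m \<longrightarrow> m = w" using finite_has_minimal[OF assms(1,2)] by blast
  have "m \<subseteq> w" if "w \<in> F" for w using chain[OF m(1) that] m(2) that by auto
  then show ?thesis using m(1) by blast
qed

lemma chain_finite_gap:
  assumes chain: "\<And>v w. v \<in> C \<Longrightarrow> w \<in> C \<Longrightarrow> v \<subseteq> w \<or> w \<subseteq> v"
    and nontrivial: "\<exists>v\<in>C. \<exists>w\<in>C. v \<subset> w"
    and fin: "finite Lo" "finite Hi" and sub: "Lo \<subseteq> C" "Hi \<subseteq> C"
    and sep: "\<And>l h. l \<in> Lo \<Longrightarrow> h \<in> Hi \<Longrightarrow> l \<subset> h"
    and Lo: "\<And>l. l \<in> Lo \<Longrightarrow> \<not> is_greatest_in C l"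
    and Hi: "\<And>h. h \<in> Hi \<Longrightarrow> \<not> is_least_in C h"
  shows "\<exists>w1\<in>C. \<exists>w2\<in>C. w1 \<subset> w2 \<and> (\<forall>l\<in>Lo. l \<subseteq> w1) \<and> (\<forall>h\<in>Hi. w2 \<subseteq> h)"
proof -
  have max_Lo: "\<exists>l\<in>Lo. \<forall>w\<in>Lo. w \<subseteq> l" if "Lo \<noteq> {}"
    by (rule finite_chain_has_greatest[OF fin(1) that]) (use chain sub(1) in blast)
  have min_Hi: "\<exists>h\<in>Hi. \<forall>w\<in>Hi. h \<subseteq> w" if "Hi \<noteq> {}"
    by (rule finite_chain_has_least[OF fin(2) that]) (use chain sub(2) in blast)
  have above: "\<exists>w\<in>C. l \<subset> w" if l: "l \<in> Lo" for l
  proof -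
    obtain w where "w \<in> C" "\<not> w \<subseteq> l"
      using Lo[OF l] sub(1) l unfolding is_greatest_in_def by blast
    then show ?thesis using chain[of l w] sub(1) l by blast
  qed
  have below: "\<exists>w\<in>C. w \<subset> h" if h: "h \<in> Hi" for h
  proof -
    obtain w where "w \<in> C" "\<not> h \<subseteq> w"
      using Hi[OF h] sub(2) h unfolding is_least_in_def by blast
    then show ?thesis using chain[of h w] sub(2) h by blast
  qed
  consider "Lo = {}" "Hi = {}" | "Lo \<noteq> {}" "Hi = {}" | "Lo = {}" "Hi \<noteq> {}" | "Lo \<noteq> {}" "Hi \<noteq> {}"
    by blast
  then show ?thesis
  proof cases
    case 1
    then show ?thesis using nontrivial by blast
  next
    case 2
    obtain l where l: "l \<in> Lo" "\<forall>w\<in>Lo. w \<subseteq> l" using max_Lo 2(1) by blast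
    obtain w where "w \<in> C" "l \<subset> w" using above[OF l(1)] by blast
    then show ?thesis using l sub(1) 2(2) by (intro bexI[of _ l] bexI[of _ w]) auto
  next
    case 3
    obtain h where h: "h \<in> Hi" "\<forall>w\<in>Hi. h \<subseteq> w" using min_Hi 3(2) by blast
    obtain w where "w \<in> C" "w \<subset> h" using below[OF h(1)] by blast
    then show ?thesis using h sub(2) 3(1) by (intro bexI[of _ w] bexI[of _ h]) auto
  next
    case 4
    obtain l where l: "l \<in> Lo" "\<forall>w\<in>Lo. w \<subseteq> l" using max_Lo 4(1) by blast
    obtain h where h: "h \<in> Hi" "\<forall>w\<in>Hi. h \<subseteq> w" using min_Hi 4(2) by blast
    have "l \<subset> h" using sep l(1) h(1) .
    then show ?thesis using l h sub by (intro bexI[of _ l] bexI[of _ h]) auto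
  qed
qed

locale dense_coloured_chain =
  fixes I :: "'i set" and P :: "'i \<Rightarrow> 'a set set"
  assumes colours_disjoint: "i \<in> I \<Longrightarrow> j \<in> I \<Longrightarrow> i \<noteq> j \<Longrightarrow> P i \<inter> P j = {}"
    and chain: "v \<in> \<Union>(P ` I) \<Longrightarrow> w \<in> \<Union>(P ` I) \<Longrightarrow> v \<subseteq> w \<or> w \<subseteq> v"
    and dense: "i \<in> I \<Longrightarrow> v \<in> \<Union>(P ` I) \<Longrightarrow> w \<in> \<Union>(P ` I) \<Longrightarrow> v \<subset> w \<Longrightarrow> \<exists>z\<in>P i. v \<subset> z \<and> z \<subset> w"
    and nontrivial: "\<exists>v\<in>\<Union>(P ` I). \<exists>w\<in>\<Union>(P ` I). v \<subset> w"
begin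

abbreviation carrier :: "'a set set" where
  "carrier \<equiv> \<Union>(P ` I)"

lemma least_in_colour_iff:
  assumes i: "i \<in> I" and m: "m \<in> P i"
  shows "is_least_in (P i) m \<longleftrightarrow> is_least_in carrier m"
proof
  assume least: "is_least_in (P i) m"
  have "m \<subseteq> w" if w: "w \<in> carrier" for w
  proof (rule ccontr)
    assume "\<not> m \<subseteq> w"
    then have "w \<subset> m" using chain[OF w] i m by blast
    then obtain z where "z \<in> P i" "z \<subset> m" using dense[OF i w] i m by blast
    then show False using least unfolding is_least_in_def by blast
  qed
  then show "is_least_in carrier m" using i m unfolding is_least_in_def by blast
qed (use i m in \<open>auto simp: is_least_in_def\<close>)

lemma greatest_in_colour_iff:
  assumes i: "i \<in> I" and m: "m \<in> P i"
  shows "is_greatest_in (P i) m \<longleftrightarrow> is_greatest_in carrier m"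
proof
  assume greatest: "is_greatest_in (P i) m"
  have "w \<subseteq> m" if w: "w \<in> carrier" for w
  proof (rule ccontr)
    assume "\<not> w \<subseteq> m"
    then have "m \<subset> w" using chain[OF w] i m by blast
    then obtain z where "z \<in> P i" "m \<subset> z" using dense[OF i _ w] i m by blast
    then show False using greatest unfolding is_greatest_in_def by blast
  qed
  then show "is_greatest_in carrier m" using i m unfolding is_greatest_in_def by blast
qed (use i m in \<open>auto simp: is_greatest_in_def\<close>)

lemma least_not_greatest: "is_least_in carrier m \<Longrightarrow> \<not> is_greatest_in carrier m"
  using nontrivial unfolding is_least_in_def is_greatest_in_def by blast

end

text \<open>Partial isomorphisms also match least and greatest elements: an endpoint paired with an inner
  point would leave no room on one side for later elements.\<close>

definition matching :: "'i set \<Rightarrow> ('i \<Rightarrow> 'a set set) \<Rightarrow> ('i \<Rightarrow> 'b set set) \<Rightarrow> 'a set \<Rightarrow> 'b set \<Rightarrow> bool" where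
  "matching I P Q u v \<longleftrightarrow> (\<forall>i\<in>I. u \<in> P i \<longleftrightarrow> v \<in> Q i)
     \<and> (is_least_in (\<Union>(P ` I)) u \<longleftrightarrow> is_least_in (\<Union>(Q ` I)) v)
     \<and> (is_greatest_in (\<Union>(P ` I)) u \<longleftrightarrow> is_greatest_in (\<Union>(Q ` I)) v)"

definition partial_iso :: "'i set \<Rightarrow> ('i \<Rightarrow> 'a set set) \<Rightarrow> ('i \<Rightarrow> 'b set set) \<Rightarrow> ('a set \<times> 'b set) set \<Rightarrow> bool" where
  "partial_iso I P Q p \<longleftrightarrow> finite p \<and> p \<subseteq> \<Union>(P ` I) \<times> \<Union>(Q ` I)
     \<and> (\<forall>u v. (u, v) \<in> p \<longrightarrow> matching I P Q u v)
     \<and> (\<forall>u v u' v'. (u, v) \<in> p \<longrightarrow> (u', v') \<in> p \<longrightarrow> (u \<subset> u' \<longleftrightarrow> v \<subset> v') \<and> (u = u' \<longleftrightarrow> v = v'))"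

lemma matching_swap: "matching I Q P v u \<longleftrightarrow> matching I P Q u v"
  unfolding matching_def by blast

lemma partial_iso_empty: "partial_iso I P Q {}"
  unfolding partial_iso_def by simp

context
  fixes I P Q p
  assumes p: "partial_iso I P Q p"
begin

lemma partial_iso_carrier: "(u, v) \<in> p \<Longrightarrow> u \<in> \<Union>(P ` I) \<and> v \<in> \<Union>(Q ` I)"
  using p unfolding partial_iso_def by auto

lemma partial_iso_matching: "(u, v) \<in> p \<Longrightarrow> matching I P Q u v"
  using p unfolding partial_iso_def by simp

lemma partial_iso_psubset_iff: "(u, v) \<in> p \<Longrightarrow> (u', v') \<in> p \<Longrightarrow> u \<subset> u' \<longleftrightarrow> v \<subset> v'"
  using p unfolding partial_iso_def by simp

lemma partial_iso_eq_iff: "(u, v) \<in> p \<Longrightarrow> (u', v') \<in> p \<Longrightarrow> u = u' \<longleftrightarrow> v = v'"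
  using p unfolding partial_iso_def by simp

lemma partial_iso_converse_imp: "partial_iso I Q P (p\<inverse>)"
  unfolding partial_iso_def
proof (intro conjI allI impI)
  show "finite (p\<inverse>)" using p unfolding partial_iso_def by simp
  show "p\<inverse> \<subseteq> \<Union>(Q ` I) \<times> \<Union>(P ` I)" using partial_iso_carrier by auto
  fix v u assume "(v, u) \<in> p\<inverse>"
  then show "matching I Q P v u" using partial_iso_matching[of u v] matching_swap[of I Q P v u] by simp
next
  fix v u v' u' assume "(v, u) \<in> p\<inverse>" "(v', u') \<in> p\<inverse>"
  then show "v \<subset> v' \<longleftrightarrow> u \<subset> u'" using partial_iso_psubset_iff by simp
next
  fix v u v' u' assume "(v, u) \<in> p\<inverse>" "(v', u') \<in> p\<inverse>"
  then show "v = v' \<longleftrightarrow> u = u'" using partial_iso_eq_iff by simp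
qed

end

lemma partial_iso_converse: "partial_iso I Q P (p\<inverse>) \<longleftrightarrow> partial_iso I P Q p"
  using partial_iso_converse_imp[of I P Q p] partial_iso_converse_imp[of I Q P "p\<inverse>"]
  by (metis converse_converse)

locale dense_coloured_chain_pair =
  U: dense_coloured_chain I P + V: dense_coloured_chain I Q for I :: "'i set" and P Q +
  assumes least_colours: "i \<in> I \<Longrightarrow> (\<exists>m\<in>P i. is_least_in U.carrier m) \<longleftrightarrow> (\<exists>m\<in>Q i. is_least_in V.carrier m)"
    and greatest_colours:
      "i \<in> I \<Longrightarrow> (\<exists>m\<in>P i. is_greatest_in U.carrier m) \<longleftrightarrow> (\<exists>m\<in>Q i. is_greatest_in V.carrier m)"
begin

lemma dense_coloured_chain_pair_swap: "dense_coloured_chain_pair I Q P"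
  using least_colours greatest_colours
  by (intro dense_coloured_chain_pair.intro dense_coloured_chain_pair_axioms.intro
      V.dense_coloured_chain_axioms U.dense_coloured_chain_axioms) simp_all

lemma same_colour:
  assumes "k \<in> I" "u \<in> P k" "v \<in> Q k"
  shows "\<forall>i\<in>I. u \<in> P i \<longleftrightarrow> v \<in> Q i"
  using assms U.colours_disjoint V.colours_disjoint by blast

lemma partial_iso_insert:
  assumes p: "partial_iso I P Q p" and u: "u \<in> U.carrier" "u \<notin> Domain p" and v: "v \<in> V.carrier"
    and match: "matching I P Q u v"
    and below: "\<And>a b. (a, b) \<in> p \<Longrightarrow> a \<subset> u \<Longrightarrow> b \<subset> v"
    and above: "\<And>a b. (a, b) \<in> p \<Longrightarrow> u \<subset> a \<Longrightarrow> v \<subset> b"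
  shows "partial_iso I P Q (insert (u, v) p)"
proof -
  have new: "(a \<subset> u \<longleftrightarrow> b \<subset> v) \<and> (u \<subset> a \<longleftrightarrow> v \<subset> b) \<and> u \<noteq> a \<and> v \<noteq> b \<and> a \<noteq> u \<and> b \<noteq> v"
    if ab: "(a, b) \<in> p" for a b
  proof -
    have "a \<noteq> u" using ab u(2) by blast
    then have "a \<subset> u \<or> u \<subset> a"
      using U.chain[OF partial_iso_carrier[OF p ab, THEN conjunct1] u(1)] by blast
    then show ?thesis using below[OF ab] above[OF ab] by blast
  qed
  have compat: "(a \<subset> a' \<longleftrightarrow> b \<subset> b') \<and> (a = a' \<longleftrightarrow> b = b')"
    if ab: "(a, b) \<in> insert (u, v) p" and ab': "(a', b') \<in> insert (u, v) p" for a b a' b'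
  proof -
    consider "(a, b) = (u, v)" "(a', b') = (u, v)" | "(a, b) = (u, v)" "(a', b') \<in> p"
      | "(a, b) \<in> p" "(a', b') = (u, v)" | "(a, b) \<in> p" "(a', b') \<in> p"
      using ab ab' by blast
    then show ?thesis
    proof cases
      case 1 then show ?thesis by simp
    next
      case 2 then show ?thesis using new[of a' b'] by simp
    next
      case 3 then show ?thesis using new[of a b] by simp
    next
      case 4 then show ?thesis using partial_iso_psubset_iff[OF p 4] partial_iso_eq_iff[OF p 4] by simp
    qed
  qed
  show ?thesis unfolding partial_iso_def
  proof (intro conjI allI impI)
    fix a b a' b' assume "(a, b) \<in> insert (u, v) p" "(a', b') \<in> insert (u, v) p"
    from compat[OF this] show "a \<subset> a' \<longleftrightarrow> b \<subset> b'" "a = a' \<longleftrightarrow> b = b'" by simp_all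
  qed (use p u v match partial_iso_matching[OF p] in \<open>auto simp: partial_iso_def\<close>)
qed

lemma extend_domain_least:
  assumes p: "partial_iso I P Q p" and u: "k \<in> I" "u \<in> P k" "u \<notin> Domain p"
    and least: "is_least_in U.carrier u"
  shows "\<exists>v. partial_iso I P Q (insert (u, v) p)"
proof -
  obtain v where v: "v \<in> Q k" "is_least_in V.carrier v" using least_colours[OF u(1)] u(2) least by blast
  have uU: "u \<in> U.carrier" and vV: "v \<in> V.carrier" using u v by auto
  have match: "matching I P Q u v"
    unfolding matching_def
      using same_colour[OF u(1,2) v(1)] least v(2) U.least_not_greatest V.least_not_greatest
    by blast
  have below: "b \<subset> v" if "(a, b) \<in> p" "a \<subset> u" for a b
    using least partial_iso_carrier[OF p that(1)] that(2) unfolding is_least_in_def by blast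
  have above: "v \<subset> b" if ab: "(a, b) \<in> p" and "u \<subset> a" for a b
  proof -
    have "a \<noteq> u" using ab u(3) by blast
    then have "\<not> is_least_in U.carrier a" using least unfolding is_least_in_def by blast
    then have "\<not> is_least_in V.carrier b"
      using partial_iso_matching[OF p ab] unfolding matching_def by blast
    then show "v \<subset> b" using v(2) partial_iso_carrier[OF p ab] unfolding is_least_in_def by blast
  qed
  have "partial_iso I P Q (insert (u, v) p)"
    by (rule partial_iso_insert[OF p uU u(3) vV match]) (fact below, fact above)
  then show ?thesis ..
qed

lemma extend_domain_greatest:
  assumes p: "partial_iso I P Q p" and u: "k \<in> I" "u \<in> P k" "u \<notin> Domain p"
    and greatest: "is_greatest_in U.carrier u"
  shows "\<exists>v. partial_iso I P Q (insert (u, v) p)"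
proof -
  obtain v where v: "v \<in> Q k" "is_greatest_in V.carrier v"
    using greatest_colours[OF u(1)] u(2) greatest by blast
  have uU: "u \<in> U.carrier" and vV: "v \<in> V.carrier" using u v by auto
  have match: "matching I P Q u v"
    unfolding matching_def
      using same_colour[OF u(1,2) v(1)] greatest v(2) U.least_not_greatest V.least_not_greatest
    by blast
  have below: "b \<subset> v" if ab: "(a, b) \<in> p" and "a \<subset> u" for a b
  proof -
    have "a \<noteq> u" using ab u(3) by blast
    then have "\<not> is_greatest_in U.carrier a" using greatest unfolding is_greatest_in_def by blast
    then have "\<not> is_greatest_in V.carrier b"
      using partial_iso_matching[OF p ab] unfolding matching_def by blast
    then show "b \<subset> v" using v(2) partial_iso_carrier[OF p ab] unfolding is_greatest_in_def by blast
  qed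
  have above: "v \<subset> b" if "(a, b) \<in> p" "u \<subset> a" for a b
    using greatest partial_iso_carrier[OF p that(1)] that(2) unfolding is_greatest_in_def by blast
  have "partial_iso I P Q (insert (u, v) p)"
    by (rule partial_iso_insert[OF p uU u(3) vV match]) (fact below, fact above)
  then show ?thesis ..
qed

lemma extend_domain_inner:
  assumes p: "partial_iso I P Q p" and u: "k \<in> I" "u \<in> P k" "u \<notin> Domain p"
    and not_least: "\<not> is_least_in U.carrier u" and not_greatest: "\<not> is_greatest_in U.carrier u"
  shows "\<exists>v. partial_iso I P Q (insert (u, v) p)"
proof -
  have uU: "u \<in> U.carrier" using u by blast
  define Lo where "Lo = {b. \<exists>a. (a, b) \<in> p \<and> a \<subset> u}"
  define Hi where "Hi = {b. \<exists>a. (a, b) \<in> p \<and> u \<subset> a}"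
  have "finite (Range p)" using p unfolding partial_iso_def by (simp add: finite_Range)
  then have fin: "finite Lo" "finite Hi" unfolding Lo_def Hi_def by (auto elim: rev_finite_subset)
  have sub: "Lo \<subseteq> V.carrier" "Hi \<subseteq> V.carrier"
    using partial_iso_carrier[OF p] unfolding Lo_def Hi_def by blast+
  have sep: "l \<subset> h" if l: "l \<in> Lo" and h: "h \<in> Hi" for l h
  proof -
    obtain a a' where "(a, l) \<in> p" "(a', h) \<in> p" "a \<subset> a'" using l h unfolding Lo_def Hi_def by blast
    then show ?thesis using partial_iso_psubset_iff[OF p] by simp
  qed
  have Lo_not_greatest: "\<not> is_greatest_in V.carrier l" if l: "l \<in> Lo" for l
  proof -
    obtain a where a: "(a, l) \<in> p" "a \<subset> u" using l unfolding Lo_def by blast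
    then have "\<not> is_greatest_in U.carrier a" using uU unfolding is_greatest_in_def by blast
    then show ?thesis using partial_iso_matching[OF p a(1)] unfolding matching_def by blast
  qed
  have Hi_not_least: "\<not> is_least_in V.carrier h" if h: "h \<in> Hi" for h
  proof -
    obtain a where a: "(a, h) \<in> p" "u \<subset> a" using h unfolding Hi_def by blast
    then have "\<not> is_least_in U.carrier a" using uU unfolding is_least_in_def by blast
    then show ?thesis using partial_iso_matching[OF p a(1)] unfolding matching_def by blast
  qed
  obtain w1 w2 where w: "w1 \<in> V.carrier" "w2 \<in> V.carrier" "w1 \<subset> w2" "\<forall>l\<in>Lo. l \<subseteq> w1" "\<forall>h\<in>Hi. w2 \<subseteq> h"
    using chain_finite_gap[OF V.chain V.nontrivial fin sub sep Lo_not_greatest Hi_not_least] by blast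
  obtain v where v: "v \<in> Q k" "w1 \<subset> v" "v \<subset> w2" using V.dense[OF u(1) w(1-3)] by blast
  have vV: "v \<in> V.carrier" using u(1) v(1) by blast
  have "\<not> is_least_in V.carrier v" "\<not> is_greatest_in V.carrier v"
    using v w(1,2) unfolding is_least_in_def is_greatest_in_def by blast+
  then have match: "matching I P Q u v"
    unfolding matching_def using same_colour[OF u(1,2) v(1)] not_least not_greatest by blast
  have below: "b \<subset> v" if "(a, b) \<in> p" "a \<subset> u" for a b
    using that w(4) v(2) unfolding Lo_def by blast
  have above: "v \<subset> b" if "(a, b) \<in> p" "u \<subset> a" for a b
    using that w(5) v(3) unfolding Hi_def by blast
  have "partial_iso I P Q (insert (u, v) p)"
    by (rule partial_iso_insert[OF p uU u(3) vV match]) (fact below, fact above)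
  then show ?thesis ..
qed

lemma extend_domain:
  assumes p: "partial_iso I P Q p" and u: "u \<in> U.carrier"
  shows "\<exists>v. partial_iso I P Q (insert (u, v) p)"
proof (cases "u \<in> Domain p")
  case True
  then obtain v where "(u, v) \<in> p" by blast
  then have "insert (u, v) p = p" by blast
  then show ?thesis using p by metis
next
  case False
  obtain k where k: "k \<in> I" "u \<in> P k" using u by blast
  show ?thesis
    using extend_domain_least[OF p k False] extend_domain_greatest[OF p k False]
      extend_domain_inner[OF p k False] by blast
qed

lemma extend_range:
  assumes p: "partial_iso I P Q p" and v: "v \<in> V.carrier"
  shows "\<exists>u. partial_iso I P Q (insert (u, v) p)"
proof -
  interpret swapped: dense_coloured_chain_pair I Q P by (rule dense_coloured_chain_pair_swap)
  obtain u where "partial_iso I Q P (insert (v, u) (p\<inverse>))"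
    using swapped.extend_domain[of "p\<inverse>" v] p v partial_iso_converse by blast
  moreover have "insert (v, u) (p\<inverse>) = (insert (u, v) p)\<inverse>" by blast
  ultimately show ?thesis using partial_iso_converse by metis
qed

theorem coloured_iso_exists:
  assumes "countable U.carrier" "countable V.carrier"
  shows "\<exists>h. bij_betw h U.carrier V.carrier \<and> (\<forall>w\<in>U.carrier. \<forall>w'\<in>U.carrier. w \<subset> w' \<longleftrightarrow> h w \<subset> h w')
    \<and> (\<forall>i\<in>I. \<forall>w\<in>U.carrier. w \<in> P i \<longleftrightarrow> h w \<in> Q i)"
proof -
  obtain R where dom: "\<forall>u\<in>U.carrier. u \<in> Domain R" and ran: "\<forall>v\<in>V.carrier. v \<in> Range R"
    and R: "\<forall>a\<in>R. \<forall>b\<in>R. \<exists>p. partial_iso I P Q p \<and> a \<in> p \<and> b \<in> p"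
    using countable_back_and_forth[OF assms extend_domain extend_range partial_iso_empty] by blast
  have R_carrier: "(u, v) \<in> U.carrier \<times> V.carrier" if uv: "(u, v) \<in> R" for u v
  proof -
    obtain p where "partial_iso I P Q p" "(u, v) \<in> p" using bspec[OF bspec[OF R uv] uv] by blast
    then show ?thesis using partial_iso_carrier by simp
  qed
  have R_matching: "matching I P Q u v" if uv: "(u, v) \<in> R" for u v
  proof -
    obtain p where "partial_iso I P Q p" "(u, v) \<in> p" using bspec[OF bspec[OF R uv] uv] by blast
    then show ?thesis by (rule partial_iso_matching)
  qed
  have R_compat: "(u \<subset> u' \<longleftrightarrow> v \<subset> v') \<and> (u = u' \<longleftrightarrow> v = v')"
    if uv: "(u, v) \<in> R" and uv': "(u', v') \<in> R" for u v u' v'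
  proof -
    obtain p where p: "partial_iso I P Q p" and "(u, v) \<in> p" "(u', v') \<in> p"
      using bspec[OF bspec[OF R uv] uv'] by blast
    then show ?thesis using partial_iso_psubset_iff[OF p] partial_iso_eq_iff[OF p] by simp
  qed
  define h where "h = (\<lambda>u. SOME v. (u, v) \<in> R)"
  have "bij_betw h U.carrier V.carrier \<and> (\<forall>u\<in>U.carrier. (u, h u) \<in> R)"
    unfolding h_def
  proof (rule bij_betw_choice_one_to_one[OF dom ran])
    show "R \<subseteq> U.carrier \<times> V.carrier" using R_carrier by auto
    show "u = u' \<longleftrightarrow> v = v'" if "(u, v) \<in> R" "(u', v') \<in> R" for u v u' v'
      using R_compat[OF that] by simp
  qed
  then have bij: "bij_betw h U.carrier V.carrier" and hR: "\<And>u. u \<in> U.carrier \<Longrightarrow> (u, h u) \<in> R"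
    by blast+
  have "\<forall>w\<in>U.carrier. \<forall>w'\<in>U.carrier. w \<subset> w' \<longleftrightarrow> h w \<subset> h w'"
    using R_compat[OF hR hR] by blast
  moreover have "\<forall>i\<in>I. \<forall>w\<in>U.carrier. w \<in> P i \<longleftrightarrow> h w \<in> Q i"
    using R_matching[OF hR] unfolding matching_def by blast
  ultimately show ?thesis using bij by blast
qed

end

section \<open>Shuffles and their limit structures\<close>

lemma enat_less_le_trans: "enat j < \<alpha> \<Longrightarrow> i \<le> j \<Longrightarrow> enat i < \<alpha>"
  by (meson enat_ord_simps(1) order_le_less_trans)

lemma shufflingD:
  assumes "shuffling X r Y s S"
  shows shuffling_nonempty: "S \<noteq> {}"
    and shuffling_subset: "S \<subseteq> X \<times> Y"
    and shuffling_initial: "y \<in> Y \<Longrightarrow> initial_seg X r (sec_left S y)"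
    and shuffling_no_sup: "y \<in> Y \<Longrightarrow> \<nexists>z. is_sup_in X r (sec_left S y) z"
    and shuffling_sec_left_mono: "y \<in> Y \<Longrightarrow> y' \<in> Y \<Longrightarrow> (y, y') \<in> s \<Longrightarrow> sec_left S y \<subset> sec_left S y'"
    and shuffling_sec_right_antimono: "x \<in> X \<Longrightarrow> x' \<in> X \<Longrightarrow> (x, x') \<in> r \<Longrightarrow> sec_right S x' \<subset> sec_right S x"
  using assms unfolding shuffling_def by blast+

text \<open>The order on the disjoint union of the levels that the canonical maps turn into \<open>\<subset>\<close>
  (see \<open>canon_map_psubset_iff\<close>).\<close>

fun shuffle_less :: "(nat \<Rightarrow> ('a \<times> 'a) set) \<Rightarrow> (nat \<Rightarrow> nat \<Rightarrow> ('a \<times> 'a) set) \<Rightarrow> nat \<times> 'a \<Rightarrow> nat \<times> 'a \<Rightarrow> bool" where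
  "shuffle_less L S (i, x) (j, y) \<longleftrightarrow>
     (if i < j then (x, y) \<in> S i j else if i = j then (x, y) \<in> L i else (y, x) \<notin> S j i)"

locale shuffle_system =
  fixes \<alpha> :: enat and A :: "nat \<Rightarrow> 'a set" and L :: "nat \<Rightarrow> ('a \<times> 'a) set"
    and S :: "nat \<Rightarrow> nat \<Rightarrow> ('a \<times> 'a) set"
  assumes lin_ord: "enat i < \<alpha> \<Longrightarrow> lin_ord (A i) (L i)"
    and shuffles: "shuffles \<alpha> A L S"
begin

abbreviation levels :: "nat set" where
  "levels \<equiv> {i. enat i < \<alpha>}"

abbreviation \<pi> :: "nat \<Rightarrow> 'a \<Rightarrow> 'a set" where
  "\<pi> \<equiv> canon_map L S A"

lemma shuffling: "i < j \<Longrightarrow> enat j < \<alpha> \<Longrightarrow> shuffling (A i) (L i) (A j) (L j) (S i j)"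
  using shuffles unfolding shuffles_def by blast

lemma shuffling_comp: "i < j \<Longrightarrow> j < k \<Longrightarrow> enat k < \<alpha> \<Longrightarrow> S i j O S j k = S i k"
  using shuffles unfolding shuffles_def by blast

lemma lin_ord_0: "enat i < \<alpha> \<Longrightarrow> lin_ord (A 0) (L 0)"
  using lin_ord enat_less_le_trans by blast

lemma canon_map_0: "\<pi> 0 x = {y \<in> A 0. (y, x) \<in> L 0}"
  unfolding canon_map_def by simp

lemma canon_map_sec_left: "0 < i \<Longrightarrow> enat i < \<alpha> \<Longrightarrow> \<pi> i x = sec_left (S 0 i) x"
  using shuffling_subset[OF shuffling[of 0 i]] unfolding canon_map_def sec_left_def by auto

lemma canon_map_initial:
  assumes i: "enat i < \<alpha>" and x: "x \<in> A i"
  shows "initial_seg (A 0) (L 0) (\<pi> i x)"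
proof (cases "i = 0")
  case True
  then have "\<pi> i x = {y \<in> A 0. (y, x) \<in> L 0}" using canon_map_0 by simp
  then show ?thesis unfolding initial_seg_def using lin_ord_trans[OF lin_ord_0[OF i]] by blast
next
  case False
  then show ?thesis using canon_map_sec_left[of i x] i x shuffling_initial[OF shuffling[of 0 i]] by simp
qed

lemma canon_map_strict_mono:
  assumes i: "enat i < \<alpha>" and x: "x \<in> A i" "x' \<in> A i" "(x, x') \<in> L i"
  shows "\<pi> i x \<subset> \<pi> i x'"
proof (cases "i = 0")
  case True
  have lo: "lin_ord (A 0) (L 0)" using lin_ord_0[OF i] .
  have "\<pi> 0 x \<subseteq> \<pi> 0 x'" unfolding canon_map_0 using lin_ord_trans[OF lo] x True by blast
  moreover have "x \<in> \<pi> 0 x' - \<pi> 0 x" unfolding canon_map_0 using x True lin_ord_irrefl[OF lo] by auto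
  ultimately show ?thesis using True by blast
next
  case False
  then show ?thesis
    using canon_map_sec_left[of i] i x shuffling_sec_left_mono[OF shuffling[of 0 i]] by simp
qed

lemma canon_map_Union:
  assumes ij: "i < j" and j: "enat j < \<alpha>" and y: "y \<in> A j"
  shows "\<pi> j y = \<Union>(\<pi> i ` sec_left (S i j) y)"
proof (cases "i = 0")
  case True
  have j0: "0 < j" using ij True by simp
  have sh: "shuffling (A 0) (L 0) (A j) (L j) (S 0 j)" using shuffling[OF j0 j] .
  have lo: "lin_ord (A 0) (L 0)" using lin_ord_0[OF j] .
  let ?C = "sec_left (S 0 j) y"
  have C: "initial_seg (A 0) (L 0) ?C" using shuffling_initial[OF sh y] .
  have "?C \<subseteq> \<Union>(\<pi> 0 ` ?C)"
  proof
    fix a assume a: "a \<in> ?C"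
    obtain a' where "a' \<in> ?C" "(a, a') \<in> L 0"
      using initial_seg_no_sup_no_greatest[OF lo C shuffling_no_sup[OF sh y] a] by blast
    then show "a \<in> \<Union>(\<pi> 0 ` ?C)" unfolding canon_map_0 using lin_ord_field[OF lo] by blast
  qed
  moreover have "\<Union>(\<pi> 0 ` ?C) \<subseteq> ?C"
    unfolding canon_map_0 using initial_segD[OF C] by blast
  ultimately show ?thesis using canon_map_sec_left[OF j0 j] True by simp
next
  case False
  then have i0: "0 < i" by simp
  have "\<pi> j y = sec_left (S 0 i O S i j) y"
    using canon_map_sec_left[OF _ j] shuffling_comp[OF i0 ij j] ij by simp
  also have "\<dots> = \<Union>(\<pi> i ` sec_left (S i j) y)"
    using canon_map_sec_left[OF i0 enat_less_le_trans[OF j]] ij unfolding sec_left_def by auto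
  finally show ?thesis .
qed

text \<open>The set \<open>\<pi> j y\<close> is the union of the images of a cut of \<open>A i\<close> without supremum, so it lies
  strictly above the images of the points of the cut and strictly below those of all other points.\<close>

lemma canon_map_cross:
  assumes ij: "i < j" and j: "enat j < \<alpha>" and x: "x \<in> A i" and y: "y \<in> A j"
  shows "(x, y) \<in> S i j \<Longrightarrow> \<pi> i x \<subset> \<pi> j y" and "(x, y) \<notin> S i j \<Longrightarrow> \<pi> j y \<subset> \<pi> i x"
proof -
  have i: "enat i < \<alpha>" using enat_less_le_trans[OF j] ij by simp
  have sh: "shuffling (A i) (L i) (A j) (L j) (S i j)" using shuffling[OF ij j] .
  note cut = lin_ord[OF i] canon_map_strict_mono[OF i] shuffling_initial[OF sh y] shuffling_no_sup[OF sh y]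
  show "\<pi> i x \<subset> \<pi> j y" if "(x, y) \<in> S i j"
    using image_cut_psubset_Union[where f = "\<pi> i", OF cut] canon_map_Union[OF ij j y] that
    unfolding sec_left_def by simp
  show "\<pi> j y \<subset> \<pi> i x" if "(x, y) \<notin> S i j"
    using Union_cut_psubset_image[where f = "\<pi> i", OF cut] canon_map_Union[OF ij j y] that x
    unfolding sec_left_def by simp
qed

lemma canon_map_psubset_of_shuffle_less:
  assumes p: "(i, x) \<in> Sigma levels A" and q: "(j, y) \<in> Sigma levels A" and less: "shuffle_less L S (i, x) (j, y)"
  shows "\<pi> i x \<subset> \<pi> j y"
proof -
  consider "i < j" | "i = j" | "j < i" by fastforce
  then show ?thesis
  proof cases
    case 1 then show ?thesis using canon_map_cross(1)[OF 1] p q less by simp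
  next
    case 2 then show ?thesis using canon_map_strict_mono p q less by simp
  next
    case 3 then show ?thesis using canon_map_cross(2)[OF 3] p q less by simp
  qed
qed

lemma shuffle_less_total:
  assumes p: "(i, x) \<in> Sigma levels A" and q: "(j, y) \<in> Sigma levels A" and ne: "(i, x) \<noteq> (j, y)"
  shows "shuffle_less L S (i, x) (j, y) \<or> shuffle_less L S (j, y) (i, x)"
  using lin_ord_cases[OF lin_ord] p q ne by (cases i j rule: linorder_cases) auto

lemma canon_map_psubset_iff:
  assumes p: "(i, x) \<in> Sigma levels A" and q: "(j, y) \<in> Sigma levels A"
  shows "\<pi> i x \<subset> \<pi> j y \<longleftrightarrow> shuffle_less L S (i, x) (j, y)"
  using canon_map_psubset_of_shuffle_less[OF p q] canon_map_psubset_of_shuffle_less[OF q p]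
    shuffle_less_total[OF p q] by blast

lemma canon_map_eq_iff:
  assumes p: "(i, x) \<in> Sigma levels A" and q: "(j, y) \<in> Sigma levels A"
  shows "\<pi> i x = \<pi> j y \<longleftrightarrow> (i, x) = (j, y)"
  using canon_map_psubset_of_shuffle_less[OF p q] canon_map_psubset_of_shuffle_less[OF q p]
    shuffle_less_total[OF p q] by blast

abbreviation U :: "'a set set" where
  "U \<equiv> limit_str \<alpha> A L S"

abbreviation P :: "nat \<Rightarrow> 'a set set" where
  "P \<equiv> pred_part A L S"

lemma limit_str_eq: "U = \<Union>(P ` levels)"
  unfolding limit_str_def ..

lemma bij_betw_canon_map: "bij_betw (\<lambda>(i, x). \<pi> i x) (Sigma levels A) U"
  unfolding bij_betw_def inj_on_def limit_str_def pred_part_def using canon_map_eq_iff by auto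

lemma canon_map_in_pred_part_iff:
  assumes "(i, x) \<in> Sigma levels A" "enat k < \<alpha>"
  shows "\<pi> i x \<in> P k \<longleftrightarrow> k = i"
  using assms canon_map_eq_iff unfolding pred_part_def by auto

lemma order_iso_canon_map: "enat k < \<alpha> \<Longrightarrow> order_iso (A k) (L k) (P k) {(v, w). v \<subset> w} (\<pi> k)"
  unfolding order_iso_def bij_betw_def inj_on_def pred_part_def
  using canon_map_eq_iff canon_map_psubset_iff by simp

lemma limit_str_initial: "w \<in> U \<Longrightarrow> initial_seg (A 0) (L 0) w"
  unfolding limit_str_def pred_part_def using canon_map_initial by auto

lemma countable_limit_str: "(\<And>i. enat i < \<alpha> \<Longrightarrow> countable (A i)) \<Longrightarrow> countable U"
  unfolding limit_str_def pred_part_def by (intro countable_UN countable_image) auto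

lemma canon_map_prod_psubset_iff:
  "p \<in> Sigma levels A \<Longrightarrow> q \<in> Sigma levels A \<Longrightarrow> case_prod \<pi> p \<subset> case_prod \<pi> q \<longleftrightarrow> shuffle_less L S p q"
  using canon_map_psubset_iff[of "fst p" "snd p" "fst q" "snd q"] by (simp add: case_prod_beta)

lemma canon_map_prod_in_pred_part_iff:
  "p \<in> Sigma levels A \<Longrightarrow> enat k < \<alpha> \<Longrightarrow> case_prod \<pi> p \<in> P k \<longleftrightarrow> k = fst p"
  using canon_map_in_pred_part_iff[of "fst p" "snd p" k] by (simp add: case_prod_beta)

context
  assumes two_levels: "enat 1 < \<alpha>"
begin

lemma lin_ord_A0: "lin_ord (A 0) (L 0)"
  using lin_ord_0[OF two_levels] .

text \<open>Since the sections \<open>sec_right (S 0 k)\<close> decrease strictly, some \<open>y\<close> is related to \<open>a\<close> but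
  not to \<open>a''\<close>.\<close>

lemma separating_point:
  assumes k: "0 < k" "enat k < \<alpha>" and a: "(a, a'') \<in> L 0"
  obtains y where "y \<in> A k" "a \<in> \<pi> k y" "a'' \<notin> \<pi> k y"
proof -
  have sh: "shuffling (A 0) (L 0) (A k) (L k) (S 0 k)" using shuffling[OF k] .
  obtain y where y: "(a, y) \<in> S 0 k" "(a'', y) \<notin> S 0 k"
    using shuffling_sec_right_antimono[OF sh _ _ a] lin_ord_field[OF lin_ord_A0 a]
    unfolding sec_right_def by blast
  then have "y \<in> A k" using shuffling_subset[OF sh] by blast
  then show ?thesis using that y canon_map_sec_left[OF k] unfolding sec_left_def by simp
qed

lemma lin_ord_0_dense:
  assumes a: "(a, a'') \<in> L 0"
  obtains a' where "(a, a') \<in> L 0" "(a', a'') \<in> L 0"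
proof -
  obtain y where y: "y \<in> A 1" "a \<in> \<pi> 1 y" "a'' \<notin> \<pi> 1 y"
    using separating_point[OF _ two_levels a] by auto
  obtain a' where a': "a' \<in> \<pi> 1 y" "(a, a') \<in> L 0"
    using initial_seg_no_sup_no_greatest[OF lin_ord_A0 _ _ y(2)] canon_map_sec_left[OF _ two_levels]
      shuffling_initial[OF shuffling[OF _ two_levels] y(1)]
      shuffling_no_sup[OF shuffling[OF _ two_levels] y(1)]
    by auto
  have "(a', a'') \<in> L 0"
    using initial_seg_below[OF lin_ord_A0 canon_map_initial[OF two_levels y(1)] a'(1)] y(3)
      lin_ord_field[OF lin_ord_A0 a] by blast
  then show ?thesis using that a'(2) by blast
qed

lemma canon_map_no_greatest:
  assumes i: "enat i < \<alpha>" and x: "x \<in> A i" and a: "a \<in> \<pi> i x"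
  shows "\<exists>a'\<in>\<pi> i x. (a, a') \<in> L 0"
proof (cases "i = 0")
  case True
  then have "(a, x) \<in> L 0" using a canon_map_0 by simp
  then obtain a' where "(a, a') \<in> L 0" "(a', x) \<in> L 0" by (rule lin_ord_0_dense)
  moreover have "a' \<in> A 0" using lin_ord_field[OF lin_ord_A0 \<open>(a, a') \<in> L 0\<close>] by blast
  ultimately show ?thesis using True canon_map_0 by auto
next
  case False
  have sh: "shuffling (A 0) (L 0) (A i) (L i) (S 0 i)" using shuffling[OF _ i] False by simp
  show ?thesis
    using initial_seg_no_sup_no_greatest[OF lin_ord_A0 shuffling_initial[OF sh x] shuffling_no_sup[OF sh x]]
      a canon_map_sec_left[OF _ i] False by simp
qed

lemma pred_part_separates:
  assumes k: "enat k < \<alpha>" and a: "(a, a'') \<in> L 0"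
  obtains z where "z \<in> P k" "a \<in> z" "a'' \<notin> z"
proof (cases "k = 0")
  case True
  have "a \<in> \<pi> 0 a''" "a'' \<notin> \<pi> 0 a''"
    using canon_map_0 a lin_ord_field[OF lin_ord_A0 a] lin_ord_irrefl[OF lin_ord_A0] by auto
  moreover have "\<pi> 0 a'' \<in> P 0" using lin_ord_field[OF lin_ord_A0 a] unfolding pred_part_def by blast
  ultimately show ?thesis using that True by blast
next
  case False
  then obtain y where "y \<in> A k" "a \<in> \<pi> k y" "a'' \<notin> \<pi> k y" using separating_point[OF _ k a] by auto
  then show ?thesis using that unfolding pred_part_def by blast
qed

lemma limit_str_dense:
  assumes k: "enat k < \<alpha>" and w: "w \<in> U" "w' \<in> U" "w \<subset> w'"
  shows "\<exists>z\<in>P k. w \<subset> z \<and> z \<subset> w'"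
proof -
  obtain a where a: "a \<in> w' - w" using w(3) by blast
  obtain i x where "enat i < \<alpha>" "x \<in> A i" "w' = \<pi> i x"
    using w(2) unfolding limit_str_def pred_part_def by blast
  then obtain a'' where a'': "a'' \<in> w'" "(a, a'') \<in> L 0" using canon_map_no_greatest a by blast
  obtain z where z: "z \<in> P k" "a \<in> z" "a'' \<notin> z" using pred_part_separates[OF k a''(2)] .
  have "z \<in> U" using z(1) k unfolding limit_str_def by blast
  then have "w \<subset> z \<and> z \<subset> w'"
    using initial_seg_between[OF lin_ord_A0 limit_str_initial[OF w(1)] limit_str_initial[OF w(2)]
        limit_str_initial] a z(2,3) a'' by blast
  then show ?thesis using z(1) by blast
qed

lemma limit_str_nontrivial: "\<exists>w\<in>U. \<exists>w'\<in>U. w \<subset> w'"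
proof -
  have sh: "shuffling (A 0) (L 0) (A 1) (L 1) (S 0 1)" using shuffling[OF _ two_levels] by simp
  obtain a y where ay: "(a, y) \<in> S 0 1" using shuffling_nonempty[OF sh] by auto
  then have "a \<in> A 0" "y \<in> A 1" using shuffling_subset[OF sh] by auto
  moreover have "\<pi> 0 a \<subset> \<pi> 1 y" using canon_map_cross(1)[OF _ two_levels] ay calculation by simp
  ultimately show ?thesis using two_levels enat_less_le_trans[OF two_levels]
    unfolding limit_str_def pred_part_def by blast
qed

lemma limit_str_dense_coloured_chain: "dense_coloured_chain levels P"
proof
  show "P i \<inter> P j = {}" if "i \<in> levels" "j \<in> levels" "i \<noteq> j" for i j
    using that canon_map_in_pred_part_iff unfolding pred_part_def by auto
  show "v \<subseteq> w \<or> w \<subseteq> v" if "v \<in> \<Union>(P ` levels)" "w \<in> \<Union>(P ` levels)" for v w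
    using initial_seg_chain[OF lin_ord_A0 limit_str_initial limit_str_initial] that limit_str_eq by auto
  show "\<exists>z\<in>P i. v \<subset> z \<and> z \<subset> w"
    if "i \<in> levels" "v \<in> \<Union>(P ` levels)" "w \<in> \<Union>(P ` levels)" "v \<subset> w" for i v w
    using limit_str_dense that limit_str_eq by simp
  show "\<exists>v\<in>\<Union>(P ` levels). \<exists>w\<in>\<Union>(P ` levels). v \<subset> w"
    using limit_str_nontrivial limit_str_eq by simp
qed

lemma has_least_iff_least_colour:
  assumes k: "enat k < \<alpha>"
  shows "has_least (A k) (L k) \<longleftrightarrow> (\<exists>m\<in>P k. is_least_in U m)"
proof -
  interpret dense_coloured_chain levels P by (rule limit_str_dense_coloured_chain)
  have "has_least (A k) (L k) \<longleftrightarrow> (\<exists>m. is_least_in (P k) m)"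
    using order_iso_has_least[OF order_iso_canon_map[OF k]] has_least_psubset_iff by simp
  also have "\<dots> \<longleftrightarrow> (\<exists>m\<in>P k. is_least_in U m)"
  proof -
    have "is_least_in (P k) m \<longleftrightarrow> m \<in> P k \<and> is_least_in U m" for m
      using least_in_colour_iff[of k m] k limit_str_eq unfolding is_least_in_def[of "P k"] by auto
    then show ?thesis by blast
  qed
  finally show ?thesis .
qed

lemma has_greatest_iff_greatest_colour:
  assumes k: "enat k < \<alpha>"
  shows "has_greatest (A k) (L k) \<longleftrightarrow> (\<exists>m\<in>P k. is_greatest_in U m)"
proof -
  interpret dense_coloured_chain levels P by (rule limit_str_dense_coloured_chain)
  have "has_greatest (A k) (L k) \<longleftrightarrow> (\<exists>m. is_greatest_in (P k) m)"
    using order_iso_has_least[OF order_iso_converse[OF order_iso_canon_map[OF k]]] has_greatest_psubset_iff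
    by simp
  also have "\<dots> \<longleftrightarrow> (\<exists>m\<in>P k. is_greatest_in U m)"
  proof -
    have "is_greatest_in (P k) m \<longleftrightarrow> m \<in> P k \<and> is_greatest_in U m" for m
      using greatest_in_colour_iff[of k m] k limit_str_eq unfolding is_greatest_in_def[of "P k"] by auto
    then show ?thesis by blast
  qed
  finally show ?thesis .
qed

end

end

section \<open>Isomorphisms of limit structures\<close>

definition levelwise_iso :: "enat \<Rightarrow> (nat \<Rightarrow> 'a set) \<Rightarrow> (nat \<Rightarrow> ('a \<times> 'a) set) \<Rightarrow> (nat \<Rightarrow> nat \<Rightarrow> ('a \<times> 'a) set)
    \<Rightarrow> (nat \<Rightarrow> 'b set) \<Rightarrow> (nat \<Rightarrow> ('b \<times> 'b) set) \<Rightarrow> (nat \<Rightarrow> nat \<Rightarrow> ('b \<times> 'b) set) \<Rightarrow> (nat \<Rightarrow> 'a \<Rightarrow> 'b) \<Rightarrow> bool"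
  where "levelwise_iso \<alpha> A LA SA B LB SB f \<longleftrightarrow>
    (\<forall>i. enat i < \<alpha> \<longrightarrow> order_iso (A i) (LA i) (B i) (LB i) (f i)) \<and>
    (\<forall>i j. i < j \<and> enat j < \<alpha> \<longrightarrow> (\<forall>x\<in>A i. \<forall>y\<in>A j. (x, y) \<in> SA i j \<longleftrightarrow> (f i x, f j y) \<in> SB i j))"

definition shuffle_iso :: "enat \<Rightarrow> (nat \<Rightarrow> 'a set) \<Rightarrow> (nat \<Rightarrow> ('a \<times> 'a) set) \<Rightarrow> (nat \<Rightarrow> nat \<Rightarrow> ('a \<times> 'a) set)
    \<Rightarrow> (nat \<Rightarrow> 'b set) \<Rightarrow> (nat \<Rightarrow> ('b \<times> 'b) set) \<Rightarrow> (nat \<Rightarrow> nat \<Rightarrow> ('b \<times> 'b) set) \<Rightarrow> (nat \<times> 'a \<Rightarrow> nat \<times> 'b) \<Rightarrow> bool"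
  where "shuffle_iso \<alpha> A LA SA B LB SB \<phi> \<longleftrightarrow>
    bij_betw \<phi> (Sigma {i. enat i < \<alpha>} A) (Sigma {i. enat i < \<alpha>} B) \<and>
    (\<forall>p\<in>Sigma {i. enat i < \<alpha>} A. fst (\<phi> p) = fst p \<and>
       (\<forall>q\<in>Sigma {i. enat i < \<alpha>} A. shuffle_less LA SA p q \<longleftrightarrow> shuffle_less LB SB (\<phi> p) (\<phi> q)))"

lemma shuffle_iso_of_levelwise_iso:
  assumes f: "levelwise_iso \<alpha> A LA SA B LB SB f"
  shows "shuffle_iso \<alpha> A LA SA B LB SB (\<lambda>(i, x). (i, f i x))"
proof -
  have bij: "\<And>i. enat i < \<alpha> \<Longrightarrow> bij_betw (f i) (A i) (B i)"
    and L: "\<And>i x y. enat i < \<alpha> \<Longrightarrow> x \<in> A i \<Longrightarrow> y \<in> A i \<Longrightarrow> (x, y) \<in> LA i \<longleftrightarrow> (f i x, f i y) \<in> LB i"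
    and S: "\<And>i j x y. i < j \<Longrightarrow> enat j < \<alpha> \<Longrightarrow> x \<in> A i \<Longrightarrow> y \<in> A j \<Longrightarrow> (x, y) \<in> SA i j \<longleftrightarrow> (f i x, f j y) \<in> SB i j"
    using f unfolding levelwise_iso_def order_iso_def by blast+
  have "inj_on (\<lambda>(i, x). (i, f i x)) (Sigma {i. enat i < \<alpha>} A)"
    using bij unfolding bij_betw_def inj_on_def by auto
  moreover have "(\<lambda>(i, x). (i, f i x)) ` Sigma {i. enat i < \<alpha>} A = Sigma {i. enat i < \<alpha>} B"
  proof
    show "(\<lambda>(i, x). (i, f i x)) ` Sigma {i. enat i < \<alpha>} A \<subseteq> Sigma {i. enat i < \<alpha>} B"
      using bij bij_betw_apply by fastforce
    show "Sigma {i. enat i < \<alpha>} B \<subseteq> (\<lambda>(i, x). (i, f i x)) ` Sigma {i. enat i < \<alpha>} A"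
    proof
      fix p assume "p \<in> Sigma {i. enat i < \<alpha>} B"
      then obtain i b where i: "enat i < \<alpha>" and b: "b \<in> B i" and p: "p = (i, b)" by blast
      then obtain a where "a \<in> A i" "b = f i a" using bij[OF i] unfolding bij_betw_def by blast
      then show "p \<in> (\<lambda>(i, x). (i, f i x)) ` Sigma {i. enat i < \<alpha>} A" using i p by force
    qed
  qed
  moreover have "shuffle_less LA SA (i, x) (j, y) \<longleftrightarrow> shuffle_less LB SB (i, f i x) (j, f j y)"
    if "enat i < \<alpha>" "enat j < \<alpha>" "x \<in> A i" "y \<in> A j" for i j x y
    using that by (cases i j rule: linorder_cases) (simp_all add: L S)
  ultimately show ?thesis unfolding shuffle_iso_def bij_betw_def by auto
qed

lemma levelwise_iso_of_shuffle_iso: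
  assumes \<phi>: "shuffle_iso \<alpha> A LA SA B LB SB \<phi>"
  shows "levelwise_iso \<alpha> A LA SA B LB SB (\<lambda>i x. snd (\<phi> (i, x)))"
proof -
  let ?f = "\<lambda>i x. snd (\<phi> (i, x))"
  have bij: "bij_betw \<phi> (Sigma {i. enat i < \<alpha>} A) (Sigma {i. enat i < \<alpha>} B)"
    and less: "\<And>p q. p \<in> Sigma {i. enat i < \<alpha>} A \<Longrightarrow> q \<in> Sigma {i. enat i < \<alpha>} A \<Longrightarrow>
      shuffle_less LA SA p q \<longleftrightarrow> shuffle_less LB SB (\<phi> p) (\<phi> q)"
    using \<phi> unfolding shuffle_iso_def by blast+
  have \<phi>_eq: "\<phi> (i, x) = (i, ?f i x)" if "enat i < \<alpha>" "x \<in> A i" for i x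
  proof -
    have "fst (\<phi> (i, x)) = i" using \<phi> that unfolding shuffle_iso_def by auto
    then show ?thesis by (metis prod.collapse)
  qed
  have "bij_betw (?f i) (A i) (B i)" if i: "enat i < \<alpha>" for i
    unfolding bij_betw_def
  proof
    show "inj_on (?f i) (A i)"
    proof (rule inj_onI)
      fix x y assume "x \<in> A i" "y \<in> A i" "?f i x = ?f i y"
      then have "\<phi> (i, x) = \<phi> (i, y)" using \<phi>_eq i by metis
      then show "x = y"
        using bij_betw_imp_inj_on[OF bij] i \<open>x \<in> A i\<close> \<open>y \<in> A i\<close> unfolding inj_on_def by blast
    qed
    show "?f i ` A i = B i"
    proof
      show "?f i ` A i \<subseteq> B i" using bij_betw_apply[OF bij] \<phi>_eq i by fastforce
      show "B i \<subseteq> ?f i ` A i"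
      proof
        fix b assume "b \<in> B i"
        then have "(i, b) \<in> \<phi> ` Sigma {i. enat i < \<alpha>} A" using bij i unfolding bij_betw_def by simp
        then obtain j a where ja: "enat j < \<alpha>" "a \<in> A j" "(i, b) = \<phi> (j, a)" by blast
        then have "(i, b) = (j, ?f j a)" using \<phi>_eq[OF ja(1,2)] by simp
        then have "j = i" "b = ?f i a" by auto
        then show "b \<in> ?f i ` A i" using ja(2) by blast
      qed
    qed
  qed
  moreover have "shuffle_less LA SA (i, x) (j, y) \<longleftrightarrow> shuffle_less LB SB (i, ?f i x) (j, ?f j y)"
    if "enat i < \<alpha>" "enat j < \<alpha>" "x \<in> A i" "y \<in> A j" for i j x y
    using less[of "(i, x)" "(j, y)"] \<phi>_eq that by simp
  then have "(x, y) \<in> LA i \<longleftrightarrow> (?f i x, ?f i y) \<in> LB i" if "enat i < \<alpha>" "x \<in> A i" "y \<in> A i" for i x y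
    using that by fastforce
  moreover have "(x, y) \<in> SA i j \<longleftrightarrow> (?f i x, ?f j y) \<in> SB i j"
    if "i < j" "enat j < \<alpha>" "x \<in> A i" "y \<in> A j" for i j x y
    using \<open>\<And>i j x y. _ \<Longrightarrow> _ \<Longrightarrow> _ \<Longrightarrow> _ \<Longrightarrow> shuffle_less LA SA (i, x) (j, y) \<longleftrightarrow> _\<close>[of i j x y]
      that enat_less_le_trans[of j \<alpha> i] by simp
  ultimately show ?thesis unfolding levelwise_iso_def order_iso_def by blast
qed

lemma shuffle_iso_iff_levelwise_iso:
  "(\<exists>\<phi>. shuffle_iso \<alpha> A LA SA B LB SB \<phi>) \<longleftrightarrow> (\<exists>f. levelwise_iso \<alpha> A LA SA B LB SB f)"
  using shuffle_iso_of_levelwise_iso levelwise_iso_of_shuffle_iso by blast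

locale shuffle_pair = A: shuffle_system \<alpha> A LA SA + B: shuffle_system \<alpha> B LB SB
  for \<alpha> A LA SA B LB SB
begin

lemma shuffle_iso_of_limit_iso:
  assumes h: "limit_iso \<alpha> A LA SA B LB SB h"
  shows "shuffle_iso \<alpha> A LA SA B LB SB (\<lambda>p. inv_into (Sigma A.levels B) (case_prod B.\<pi>) (h (case_prod A.\<pi> p)))"
    (is "shuffle_iso _ _ _ _ _ _ _ ?\<phi>")
proof -
  have h_bij: "bij_betw h A.U B.U"
    and h_psubset: "\<And>W W'. W \<in> A.U \<Longrightarrow> W' \<in> A.U \<Longrightarrow> W \<subset> W' \<longleftrightarrow> h W \<subset> h W'"
    and h_colour: "\<And>k W. enat k < \<alpha> \<Longrightarrow> W \<in> A.U \<Longrightarrow> W \<in> A.P k \<longleftrightarrow> h W \<in> B.P k"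
    using h unfolding limit_iso_def by simp_all
  have bij: "bij_betw ?\<phi> (Sigma A.levels A) (Sigma A.levels B)"
    using bij_betw_trans[OF A.bij_betw_canon_map
        bij_betw_trans[OF h_bij bij_betw_inv_into[OF B.bij_betw_canon_map]]]
    by (simp add: comp_def)
  have FA: "case_prod A.\<pi> p \<in> A.U" if "p \<in> Sigma A.levels A" for p
    using bij_betw_apply[OF A.bij_betw_canon_map that] .
  have FB: "case_prod B.\<pi> (?\<phi> p) = h (case_prod A.\<pi> p)" if "p \<in> Sigma A.levels A" for p
  proof (rule f_inv_into_f)
    show "h (case_prod A.\<pi> p) \<in> case_prod B.\<pi> ` Sigma A.levels B"
      using bij_betw_apply[OF h_bij FA[OF that]] bij_betw_imp_surj_on[OF B.bij_betw_canon_map] by simp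
  qed
  have fst: "fst (?\<phi> p) = fst p" if p: "p \<in> Sigma A.levels A" for p
  proof -
    have "case_prod A.\<pi> p \<in> A.P (fst p)" using A.canon_map_prod_in_pred_part_iff[OF p] p by auto
    then have "h (case_prod A.\<pi> p) \<in> B.P (fst p)" using h_colour[OF _ FA[OF p]] p by auto
    then have "case_prod B.\<pi> (?\<phi> p) \<in> B.P (fst p)" by (simp only: FB[OF p])
    then show ?thesis using B.canon_map_prod_in_pred_part_iff[OF bij_betw_apply[OF bij p]] p by auto
  qed
  have less: "shuffle_less LA SA p q \<longleftrightarrow> shuffle_less LB SB (?\<phi> p) (?\<phi> q)"
    if pq: "p \<in> Sigma A.levels A" "q \<in> Sigma A.levels A" for p q
  proof -
    have "shuffle_less LA SA p q \<longleftrightarrow> case_prod A.\<pi> p \<subset> case_prod A.\<pi> q"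
      using A.canon_map_prod_psubset_iff[OF pq] by (rule sym)
    also have "\<dots> \<longleftrightarrow> h (case_prod A.\<pi> p) \<subset> h (case_prod A.\<pi> q)" using h_psubset[OF FA FA] pq .
    also have "\<dots> \<longleftrightarrow> case_prod B.\<pi> (?\<phi> p) \<subset> case_prod B.\<pi> (?\<phi> q)" by (simp only: FB pq)
    also have "\<dots> \<longleftrightarrow> shuffle_less LB SB (?\<phi> p) (?\<phi> q)"
      using B.canon_map_prod_psubset_iff[OF bij_betw_apply[OF bij pq(1)] bij_betw_apply[OF bij pq(2)]] .
    finally show ?thesis .
  qed
  show ?thesis unfolding shuffle_iso_def by (intro conjI ballI bij fst less)
qed

lemma limit_iso_of_shuffle_iso:
  assumes \<phi>: "shuffle_iso \<alpha> A LA SA B LB SB \<phi>"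
  shows "limit_iso \<alpha> A LA SA B LB SB (\<lambda>W. case_prod B.\<pi> (\<phi> (inv_into (Sigma A.levels A) (case_prod A.\<pi>) W)))"
    (is "limit_iso _ _ _ _ _ _ _ ?h")
proof -
  have \<phi>_bij: "bij_betw \<phi> (Sigma A.levels A) (Sigma A.levels B)"
    and \<phi>_fst: "\<And>p. p \<in> Sigma A.levels A \<Longrightarrow> fst (\<phi> p) = fst p"
    and \<phi>_less: "\<And>p q. p \<in> Sigma A.levels A \<Longrightarrow> q \<in> Sigma A.levels A \<Longrightarrow>
      shuffle_less LA SA p q \<longleftrightarrow> shuffle_less LB SB (\<phi> p) (\<phi> q)"
    using \<phi> unfolding shuffle_iso_def by blast+
  have bij: "bij_betw ?h A.U B.U"
    using bij_betw_trans[OF bij_betw_inv_into[OF A.bij_betw_canon_map]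
        bij_betw_trans[OF \<phi>_bij B.bij_betw_canon_map]]
    by (simp add: comp_def)
  have h_canon: "?h (case_prod A.\<pi> p) = case_prod B.\<pi> (\<phi> p)" if "p \<in> Sigma A.levels A" for p
    using bij_betw_inv_into_left[OF A.bij_betw_canon_map that] by simp
  have U: "A.U = case_prod A.\<pi> ` Sigma A.levels A" using A.bij_betw_canon_map by (simp add: bij_betw_def)
  have psubset: "case_prod A.\<pi> p \<subset> case_prod A.\<pi> q \<longleftrightarrow> ?h (case_prod A.\<pi> p) \<subset> ?h (case_prod A.\<pi> q)"
    if "p \<in> Sigma A.levels A" "q \<in> Sigma A.levels A" for p q
    using A.canon_map_prod_psubset_iff[OF that] \<phi>_less[OF that] h_canon that
      B.canon_map_prod_psubset_iff[OF bij_betw_apply[OF \<phi>_bij] bij_betw_apply[OF \<phi>_bij]] by simp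
  have colour: "case_prod A.\<pi> p \<in> A.P k \<longleftrightarrow> ?h (case_prod A.\<pi> p) \<in> B.P k"
    if "p \<in> Sigma A.levels A" "enat k < \<alpha>" for p k
    using A.canon_map_prod_in_pred_part_iff[OF that]
      B.canon_map_prod_in_pred_part_iff[OF bij_betw_apply[OF \<phi>_bij]]
      h_canon \<phi>_fst that by simp
  have order: "\<forall>W\<in>A.U. \<forall>W'\<in>A.U. W \<subset> W' \<longleftrightarrow> ?h W \<subset> ?h W'"
  proof (intro ballI)
    fix W W' assume "W \<in> A.U" "W' \<in> A.U"
    then obtain p q where "p \<in> Sigma A.levels A" "q \<in> Sigma A.levels A" "W = case_prod A.\<pi> p"
      "W' = case_prod A.\<pi> q" unfolding U by blast
    then show "W \<subset> W' \<longleftrightarrow> ?h W \<subset> ?h W'" using psubset by simp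
  qed
  have colours: "\<forall>k. enat k < \<alpha> \<longrightarrow> (\<forall>W\<in>A.U. W \<in> A.P k \<longleftrightarrow> ?h W \<in> B.P k)"
  proof (intro allI impI ballI)
    fix k W assume "enat k < \<alpha>" "W \<in> A.U"
    then obtain p where "p \<in> Sigma A.levels A" "W = case_prod A.\<pi> p" unfolding U by blast
    then show "W \<in> A.P k \<longleftrightarrow> ?h W \<in> B.P k" using colour \<open>enat k < \<alpha>\<close> by simp
  qed
  show ?thesis unfolding limit_iso_def using bij order colours by (rule conjI[OF _ conjI])
qed

lemma limit_iso_iff_shuffle_iso:
  "(\<exists>h. limit_iso \<alpha> A LA SA B LB SB h) \<longleftrightarrow> (\<exists>\<phi>. shuffle_iso \<alpha> A LA SA B LB SB \<phi>)"
  using shuffle_iso_of_limit_iso limit_iso_of_shuffle_iso by blast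

lemma limit_iso_of_order_isos:
  assumes two_levels: "enat 1 < \<alpha>"
    and countable: "\<And>i. enat i < \<alpha> \<Longrightarrow> countable (A i) \<and> countable (B i)"
    and isos: "\<And>i. enat i < \<alpha> \<Longrightarrow> \<exists>g. order_iso (A i) (LA i) (B i) (LB i) g"
  shows "\<exists>h. limit_iso \<alpha> A LA SA B LB SB h"
proof -
  have least: "(\<exists>m\<in>A.P k. is_least_in A.U m) \<longleftrightarrow> (\<exists>m\<in>B.P k. is_least_in B.U m)"
    and greatest: "(\<exists>m\<in>A.P k. is_greatest_in A.U m) \<longleftrightarrow> (\<exists>m\<in>B.P k. is_greatest_in B.U m)"
    if k: "enat k < \<alpha>" for k
  proof -
    obtain g where g: "order_iso (A k) (LA k) (B k) (LB k) g" using isos[OF k] by blast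
    show "(\<exists>m\<in>A.P k. is_least_in A.U m) \<longleftrightarrow> (\<exists>m\<in>B.P k. is_least_in B.U m)"
      using order_iso_has_least[OF g] A.has_least_iff_least_colour[OF two_levels k]
        B.has_least_iff_least_colour[OF two_levels k] by simp
    show "(\<exists>m\<in>A.P k. is_greatest_in A.U m) \<longleftrightarrow> (\<exists>m\<in>B.P k. is_greatest_in B.U m)"
      using order_iso_has_least[OF order_iso_converse[OF g]]
        A.has_greatest_iff_greatest_colour[OF two_levels k]
        B.has_greatest_iff_greatest_colour[OF two_levels k] by simp
  qed
  interpret dense_coloured_chain_pair A.levels A.P B.P
    by (intro dense_coloured_chain_pair.intro dense_coloured_chain_pair_axioms.intro
        A.limit_str_dense_coloured_chain[OF two_levels] B.limit_str_dense_coloured_chain[OF two_levels])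
      (use least greatest in \<open>simp_all flip: A.limit_str_eq B.limit_str_eq\<close>)
  have "countable U.carrier" "countable V.carrier"
    using A.countable_limit_str B.countable_limit_str countable
    by (simp_all flip: A.limit_str_eq B.limit_str_eq)
  then obtain h where bij: "bij_betw h A.U B.U" and order: "\<forall>w\<in>A.U. \<forall>w'\<in>A.U. w \<subset> w' \<longleftrightarrow> h w \<subset> h w'"
    and colours: "\<forall>i\<in>A.levels. \<forall>w\<in>A.U. w \<in> A.P i \<longleftrightarrow> h w \<in> B.P i"
    unfolding A.limit_str_eq B.limit_str_eq by (rule exE[OF coloured_iso_exists], elim conjE)
  have "\<forall>i. enat i < \<alpha> \<longrightarrow> (\<forall>w\<in>A.U. w \<in> A.P i \<longleftrightarrow> h w \<in> B.P i)" using colours by blast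
  then have "limit_iso \<alpha> A LA SA B LB SB h"
    unfolding limit_iso_def using bij order by (intro conjI)
  then show ?thesis by blast
qed

end

lemma levelwise_iso_of_order_isos_single_level:
  assumes "\<not> enat 1 < \<alpha>" and isos: "\<And>i. enat i < \<alpha> \<Longrightarrow> \<exists>g. order_iso (A i) (LA i) (B i) (LB i) g"
  shows "\<exists>f. levelwise_iso \<alpha> A LA SA B LB SB f"
proof -
  have "order_iso (A i) (LA i) (B i) (LB i) (SOME g. order_iso (A i) (LA i) (B i) (LB i) g)"
    if "enat i < \<alpha>" for i
    using isos[OF that] by (rule someI_ex)
  moreover have "\<not> (i < j \<and> enat j < \<alpha>)" for i j :: nat
    using assms(1) enat_less_le_trans[of j \<alpha> 1] by auto
  ultimately have "levelwise_iso \<alpha> A LA SA B LB SB (\<lambda>i. SOME g. order_iso (A i) (LA i) (B i) (LB i) g)"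
    unfolding levelwise_iso_def by blast
  then show ?thesis by blast
qed

theorem proposition2:
  fixes \<alpha> :: enat
    and A :: "nat \<Rightarrow> 'a set" and LA :: "nat \<Rightarrow> ('a \<times> 'a) set" and SA :: "nat \<Rightarrow> nat \<Rightarrow> ('a \<times> 'a) set"
    and B :: "nat \<Rightarrow> 'b set" and LB :: "nat \<Rightarrow> ('b \<times> 'b) set" and SB :: "nat \<Rightarrow> nat \<Rightarrow> ('b \<times> 'b) set"
  assumes linA: "\<And>i. enat i < \<alpha> \<Longrightarrow> lin_ord (A i) (LA i) \<and> countable (A i)"
    and linB: "\<And>i. enat i < \<alpha> \<Longrightarrow> lin_ord (B i) (LB i) \<and> countable (B i)"
    and shA: "shuffles \<alpha> A LA SA"
    and shB: "shuffles \<alpha> B LB SB"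
  shows "((\<exists>h. limit_iso \<alpha> A LA SA B LB SB h) \<longleftrightarrow>
           (\<exists>f. (\<forall>i. enat i < \<alpha> \<longrightarrow> order_iso (A i) (LA i) (B i) (LB i) (f i)) \<and>
                (\<forall>i j. i < j \<and> enat j < \<alpha> \<longrightarrow>
                   (\<forall>x\<in>A i. \<forall>y\<in>A j. (x, y) \<in> SA i j \<longleftrightarrow> (f i x, f j y) \<in> SB i j)))) \<and>
         ((\<exists>f. (\<forall>i. enat i < \<alpha> \<longrightarrow> order_iso (A i) (LA i) (B i) (LB i) (f i)) \<and>
                (\<forall>i j. i < j \<and> enat j < \<alpha> \<longrightarrow>
                   (\<forall>x\<in>A i. \<forall>y\<in>A j. (x, y) \<in> SA i j \<longleftrightarrow> (f i x, f j y) \<in> SB i j))) \<longleftrightarrow>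
          (\<forall>i. enat i < \<alpha> \<longrightarrow> (\<exists>g. order_iso (A i) (LA i) (B i) (LB i) g)))"
proof -
  interpret shuffle_pair \<alpha> A LA SA B LB SB
    using linA linB shA shB by (simp add: shuffle_pair_def shuffle_system_def)
  have limit_iff: "(\<exists>h. limit_iso \<alpha> A LA SA B LB SB h) \<longleftrightarrow> (\<exists>f. levelwise_iso \<alpha> A LA SA B LB SB f)"
    using limit_iso_iff_shuffle_iso shuffle_iso_iff_levelwise_iso by simp
  have levels_iff: "(\<exists>f. levelwise_iso \<alpha> A LA SA B LB SB f) \<longleftrightarrow>
      (\<forall>i. enat i < \<alpha> \<longrightarrow> (\<exists>g. order_iso (A i) (LA i) (B i) (LB i) g))"
  proof
    assume isos: "\<forall>i. enat i < \<alpha> \<longrightarrow> (\<exists>g. order_iso (A i) (LA i) (B i) (LB i) g)"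
    show "\<exists>f. levelwise_iso \<alpha> A LA SA B LB SB f"
    proof (cases "enat 1 < \<alpha>")
      case True
      have "\<exists>h. limit_iso \<alpha> A LA SA B LB SB h"
        by (rule limit_iso_of_order_isos[OF True]) (use linA linB isos in auto)
      then show ?thesis using limit_iff by blast
    next
      case False
      then show ?thesis using levelwise_iso_of_order_isos_single_level isos by blast
    qed
  qed (auto simp: levelwise_iso_def)
  show ?thesis unfolding levelwise_iso_def[symmetric] using limit_iff levels_iff by (rule conjI)
qed

end
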